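(* Let $M$ be a model with borders and $U\subseteq M$ an up-set. The following are equivalent: (1) there is a $(\wedge,\to)$-formula $\varphi$ with $v(\varphi)=U$; (2) for all $x\in M$: if for every $z\in M^s$ with $z\ge x$ there exists $y\in U\cap M^s$ bisimilar to $z$ in $M^s$, then $x\in U$; (3) for all $x\in M$: (a) if all separated points $z\ge x$ are in $U$, then $x\in U$; and (b) if $x\in M^s$ and there exists $x'\in U\cap M^s$ bisimilar to $x$ in $M^s$, then $x\in U$.
   Context: Fix $n\ge1$ and variables $p_1,\dots,p_n$. A model is $(M,\le,c)$, $(M,\le)$ a poset, $c:M\to\{0,1\}^n$ order-preserving (componentwise order), with intuitionistic Kripke semantics ($x\models p_i$ iff $c(x)_i=1$; $x\models\varphi\to\psi$ iff every $y\ge x$ satisfying $\varphi$ satisfies $\psi$). $v(\varphi)$ is the set of points of $M$ satisfying $\varphi$. A $(\wedge,\to)$-formula uses only $\wedge,\to$. A point $x$ is a $q$-border point if $x\not\models q$ and all $y>x$ satisfy $q$; separated if it is a $q$-border point for some variable $q$. $M^s$ is the set of separated points with restricted order and colouring, a model in its own right, all of whose chains have at most $n$ elements. $M$ has borders if for every variable $p$ and $x$ with $x\not\models p$ there is a $p$-border point $y\ge x$. Two points of $M^s$ are bisimilar in $M^s$ if they are related by an intuitionistic bisimulation of the model $M^s$ (colour-preserving, with forth and back conditions for $\le$); equivalently, since $M^s$ has finite depth, they have the same image under the unique p-morphism from $M^s$ to the $n$-universal model $U(n)$. *)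

theory Defs
  imports Main
begin

text \<open>Variables p_1,...,p_n are represented by indices 0,...,n-1.
A model is a carrier set M with a partial order le on M and a colouring
c :: 'a => nat => bool (c x i = True means x satisfies p_i), monotone in the
order for every i < n.\<close>

definition is_model :: "nat \<Rightarrow> 'a set \<Rightarrow> ('a \<Rightarrow> 'a \<Rightarrow> bool) \<Rightarrow> ('a \<Rightarrow> nat \<Rightarrow> bool) \<Rightarrow> bool" where
  "is_model n M le c \<longleftrightarrow>
     (\<forall>x\<in>M. le x x) \<and>
     (\<forall>x\<in>M. \<forall>y\<in>M. \<forall>z\<in>M. le x y \<longrightarrow> le y z \<longrightarrow> le x z) \<and>
     (\<forall>x\<in>M. \<forall>y\<in>M. le x y \<longrightarrow> le y x \<longrightarrow> x = y) \<and>
     (\<forall>x\<in>M. \<forall>y\<in>M. \<forall>i<n. le x y \<longrightarrow> c x i \<longrightarrow> c y i)"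

datatype frm = Var nat | Conj frm frm | Imp frm frm

fun vars :: "frm \<Rightarrow> nat set" where
  "vars (Var i) = {i}"
| "vars (Conj a b) = vars a \<union> vars b"
| "vars (Imp a b) = vars a \<union> vars b"

fun sat :: "'a set \<Rightarrow> ('a \<Rightarrow> 'a \<Rightarrow> bool) \<Rightarrow> ('a \<Rightarrow> nat \<Rightarrow> bool) \<Rightarrow> 'a \<Rightarrow> frm \<Rightarrow> bool" where
  "sat M le c x (Var i) = c x i"
| "sat M le c x (Conj a b) = (sat M le c x a \<and> sat M le c x b)"
| "sat M le c x (Imp a b) = (\<forall>y\<in>M. le x y \<longrightarrow> sat M le c y a \<longrightarrow> sat M le c y b)"

definition val :: "'a set \<Rightarrow> ('a \<Rightarrow> 'a \<Rightarrow> bool) \<Rightarrow> ('a \<Rightarrow> nat \<Rightarrow> bool) \<Rightarrow> frm \<Rightarrow> 'a set" where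
  "val M le c \<phi> = {x\<in>M. sat M le c x \<phi>}"

definition border_point :: "'a set \<Rightarrow> ('a \<Rightarrow> 'a \<Rightarrow> bool) \<Rightarrow> ('a \<Rightarrow> nat \<Rightarrow> bool) \<Rightarrow> nat \<Rightarrow> 'a \<Rightarrow> bool" where
  "border_point M le c q x \<longleftrightarrow> x \<in> M \<and> \<not> c x q \<and> (\<forall>y\<in>M. le x y \<and> y \<noteq> x \<longrightarrow> c y q)"

definition separated :: "nat \<Rightarrow> 'a set \<Rightarrow> ('a \<Rightarrow> 'a \<Rightarrow> bool) \<Rightarrow> ('a \<Rightarrow> nat \<Rightarrow> bool) \<Rightarrow> 'a \<Rightarrow> bool" where
  "separated n M le c x \<longleftrightarrow> (\<exists>q<n. border_point M le c q x)"

definition sep_pts :: "nat \<Rightarrow> 'a set \<Rightarrow> ('a \<Rightarrow> 'a \<Rightarrow> bool) \<Rightarrow> ('a \<Rightarrow> nat \<Rightarrow> bool) \<Rightarrow> 'a set" where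
  "sep_pts n M le c = {x\<in>M. separated n M le c x}"

definition has_borders :: "nat \<Rightarrow> 'a set \<Rightarrow> ('a \<Rightarrow> 'a \<Rightarrow> bool) \<Rightarrow> ('a \<Rightarrow> nat \<Rightarrow> bool) \<Rightarrow> bool" where
  "has_borders n M le c \<longleftrightarrow>
     (\<forall>p<n. \<forall>x\<in>M. \<not> c x p \<longrightarrow> (\<exists>y\<in>M. le x y \<and> border_point M le c p y))"

definition is_bisim :: "nat \<Rightarrow> 'a set \<Rightarrow> ('a \<Rightarrow> 'a \<Rightarrow> bool) \<Rightarrow> ('a \<Rightarrow> nat \<Rightarrow> bool) \<Rightarrow> ('a \<Rightarrow> 'a \<Rightarrow> bool) \<Rightarrow> bool" where
  "is_bisim n S le c R \<longleftrightarrow>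
     (\<forall>x y. R x y \<longrightarrow> x \<in> S \<and> y \<in> S) \<and>
     (\<forall>x y. R x y \<longrightarrow> (\<forall>i<n. c x i = c y i)) \<and>
     (\<forall>x y x'. R x y \<longrightarrow> x' \<in> S \<longrightarrow> le x x' \<longrightarrow> (\<exists>y'\<in>S. le y y' \<and> R x' y')) \<and>
     (\<forall>x y y'. R x y \<longrightarrow> y' \<in> S \<longrightarrow> le y y' \<longrightarrow> (\<exists>x'\<in>S. le x x' \<and> R x' y'))"

definition bisimilar_s :: "nat \<Rightarrow> 'a set \<Rightarrow> ('a \<Rightarrow> 'a \<Rightarrow> bool) \<Rightarrow> ('a \<Rightarrow> nat \<Rightarrow> bool) \<Rightarrow> 'a \<Rightarrow> 'a \<Rightarrow> bool" where
  "bisimilar_s n M le c x y \<longleftrightarrow> (\<exists>R. is_bisim n (sep_pts n M le c) le c R \<and> R x y)"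

definition up_set :: "'a set \<Rightarrow> ('a \<Rightarrow> 'a \<Rightarrow> bool) \<Rightarrow> 'a set \<Rightarrow> bool" where
  "up_set M le U \<longleftrightarrow> U \<subseteq> M \<and> (\<forall>x\<in>U. \<forall>y\<in>M. le x y \<longrightarrow> y \<in> U)"

end

theory Submission
  imports Defs
begin

text \<open>Because M has borders, a formula refuted at some point is already refuted at a separated point
above it, so the extension of a formula is determined by the separated points. On a separated point
x the n-variable theory is determined by the colour of x together with the theories of the strict
separated successors of x, and along chains of separated points the number of false variables
strictly decreases; by induction on that number only finitely many theories occur in M^s. Hence
each of them is pinned down by a single formula, equality of theories is a bisimulation of M^s, and
a bisimulation-saturated up-set U is defined by the formula saying that no separated point above
realises the theory of a separated point that is bisimilar to no point of U.\<close>

definition frm_over :: "nat \<Rightarrow> frm \<Rightarrow> bool" where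
  "frm_over n \<phi> \<longleftrightarrow> vars \<phi> \<subseteq> {..<n}"

lemma frm_over_simps [simp]:
  "frm_over n (Var i) \<longleftrightarrow> i < n"
  "frm_over n (Conj a b) \<longleftrightarrow> frm_over n a \<and> frm_over n b"
  "frm_over n (Imp a b) \<longleftrightarrow> frm_over n a \<and> frm_over n b"
  by (auto simp: frm_over_def)

lemma finite_Conj_exists:
  assumes "n \<ge> 1" "finite F" "\<forall>\<phi>\<in>F. frm_over n \<phi>"
  shows "\<exists>\<psi>. frm_over n \<psi> \<and> (\<forall>x. sat M le c x \<psi> \<longleftrightarrow> (\<forall>\<phi>\<in>F. sat M le c x \<phi>))"
  using assms(2,3)
proof (induction F rule: finite_induct)
  case empty
  show ?case by (rule exI[of _ "Imp (Var 0) (Var 0)"]) (use assms(1) in auto)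
next
  case (insert a F)
  then obtain \<psi> where "frm_over n \<psi>" "\<forall>x. sat M le c x \<psi> \<longleftrightarrow> (\<forall>\<phi>\<in>F. sat M le c x \<phi>)"
    by auto
  then show ?case using insert by (intro exI[of _ "Conj a \<psi>"]) auto
qed

locale kripke_model =
  fixes n :: nat and M :: "'a set" and le :: "'a \<Rightarrow> 'a \<Rightarrow> bool" and c :: "'a \<Rightarrow> nat \<Rightarrow> bool"
  assumes model: "is_model n M le c"
begin

abbreviation sats :: "'a \<Rightarrow> frm \<Rightarrow> bool" where
  "sats x \<phi> \<equiv> sat M le c x \<phi>"

lemma refl_le: "x \<in> M \<Longrightarrow> le x x"
  using model by (simp add: is_model_def)

lemma trans_le: "x \<in> M \<Longrightarrow> y \<in> M \<Longrightarrow> z \<in> M \<Longrightarrow> le x y \<Longrightarrow> le y z \<Longrightarrow> le x z"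
  using model unfolding is_model_def by blast

lemma mono_colour: "x \<in> M \<Longrightarrow> y \<in> M \<Longrightarrow> i < n \<Longrightarrow> le x y \<Longrightarrow> c x i \<Longrightarrow> c y i"
  using model unfolding is_model_def by blast

lemma sat_persistent:
  "frm_over n \<phi> \<Longrightarrow> x \<in> M \<Longrightarrow> y \<in> M \<Longrightarrow> le x y \<Longrightarrow> sats x \<phi> \<Longrightarrow> sats y \<phi>"
proof (induction \<phi> arbitrary: x y)
  case (Var i)
  then show ?case using mono_colour by auto
next
  case (Conj a b)
  then show ?case by auto
next
  case (Imp a b)
  then show ?case using trans_le[of x y] by auto
qed

end

locale bordered_model = kripke_model +
  assumes n_pos: "n \<ge> 1" and borders: "has_borders n M le c"
begin

abbreviation S :: "'a set" where
  "S \<equiv> sep_pts n M le c"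

lemma sep_in_M: "x \<in> S \<Longrightarrow> x \<in> M"
  by (simp add: sep_pts_def)

lemma sep_border: "x \<in> S \<Longrightarrow> \<exists>q<n. border_point M le c q x"
  by (simp add: sep_pts_def separated_def)

lemma refuted_at_sep:
  "frm_over n \<phi> \<Longrightarrow> x \<in> M \<Longrightarrow> \<not> sats x \<phi> \<Longrightarrow> \<exists>z\<in>S. le x z \<and> \<not> sats z \<phi>"
proof (induction \<phi> arbitrary: x)
  case (Var i)
  with borders obtain y where "y \<in> M" "le x y" "border_point M le c i y"
    unfolding has_borders_def by auto
  then show ?case
    using Var by (auto simp: sep_pts_def separated_def border_point_def)
next
  case (Conj a b)
  then show ?case by auto
next
  case (Imp a b)
  then obtain y where y: "y \<in> M" "le x y" "sats y a" "\<not> sats y b" by auto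
  with Imp obtain z where z: "z \<in> S" "le y z" "\<not> sats z b" by auto
  have "sats z a" using sat_persistent[of a y z] y z Imp.prems sep_in_M by auto
  moreover have "le x z" using trans_le[of x y z] Imp.prems y z sep_in_M by auto
  ultimately show ?case using z sep_in_M refl_le by auto
qed

lemma sat_Imp_iff_sep:
  assumes "x \<in> M" "frm_over n a" "frm_over n b"
  shows "sats x (Imp a b) \<longleftrightarrow> (\<forall>y\<in>S. le x y \<longrightarrow> sats y a \<longrightarrow> sats y b)"
proof
  assume "sats x (Imp a b)"
  then show "\<forall>y\<in>S. le x y \<longrightarrow> sats y a \<longrightarrow> sats y b" using sep_in_M by auto
next
  assume sep: "\<forall>y\<in>S. le x y \<longrightarrow> sats y a \<longrightarrow> sats y b"
  show "sats x (Imp a b)"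
  proof (simp, intro ballI impI, rule ccontr)
    fix y assume y: "y \<in> M" "le x y" "sats y a" "\<not> sats y b"
    then obtain w where w: "w \<in> S" "le y w" "\<not> sats w b"
      using refuted_at_sep assms by blast
    have "sats w a" using sat_persistent[of a y w] y w assms sep_in_M by auto
    moreover have "le x w" using trans_le[of x y w] assms y w sep_in_M by auto
    ultimately show False using sep w by auto
  qed
qed

definition Th :: "'a \<Rightarrow> frm set" where
  "Th x = {\<phi>. frm_over n \<phi> \<and> sats x \<phi>}"

definition colour :: "'a \<Rightarrow> nat set" where
  "colour x = {i. i < n \<and> c x i}"

definition strict_sep_theories :: "'a \<Rightarrow> frm set set" where
  "strict_sep_theories x = Th ` {y\<in>S. le x y \<and> y \<noteq> x}"

lemma sat_Imp_iff_strict: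
  assumes "x \<in> S" "frm_over n a" "frm_over n b"
  shows "sats x (Imp a b) \<longleftrightarrow>
           (sats x a \<longrightarrow> sats x b) \<and> (\<forall>t\<in>strict_sep_theories x. a \<in> t \<longrightarrow> b \<in> t)"
proof -
  have "sats x (Imp a b) \<longleftrightarrow> (\<forall>y\<in>S. le x y \<longrightarrow> sats y a \<longrightarrow> sats y b)"
    using sat_Imp_iff_sep assms sep_in_M by blast
  also have "\<dots> \<longleftrightarrow>
      (sats x a \<longrightarrow> sats x b) \<and> (\<forall>y\<in>S. le x y \<and> y \<noteq> x \<longrightarrow> sats y a \<longrightarrow> sats y b)"
    using assms refl_le sep_in_M by blast
  also have "\<dots> \<longleftrightarrow> (sats x a \<longrightarrow> sats x b) \<and> (\<forall>t\<in>strict_sep_theories x. a \<in> t \<longrightarrow> b \<in> t)"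
    using assms by (auto simp: strict_sep_theories_def Th_def)
  finally show ?thesis .
qed

lemma Th_eqI_sep:
  assumes "x \<in> S" "x' \<in> S" "colour x = colour x'"
    and "strict_sep_theories x = strict_sep_theories x'"
  shows "Th x = Th x'"
proof -
  have "frm_over n \<phi> \<Longrightarrow> sats x \<phi> \<longleftrightarrow> sats x' \<phi>" for \<phi>
  proof (induction \<phi>)
    case (Var i)
    then show ?case using assms(3) by (auto simp: colour_def set_eq_iff)
  next
    case (Conj a b)
    then show ?case by auto
  next
    case (Imp a b)
    then show ?case using sat_Imp_iff_strict assms by auto
  qed
  then show ?thesis by (auto simp: Th_def)
qed

definition rank :: "'a \<Rightarrow> nat" where
  "rank x = card {i. i < n \<and> \<not> c x i}"

lemma rank_less:
  assumes "x \<in> S" "y \<in> M" "le x y" "y \<noteq> x"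
  shows "rank y < rank x"
proof -
  obtain q where q: "q < n" "border_point M le c q x" using sep_border assms by blast
  then have "c y q" "\<not> c x q" using assms by (auto simp: border_point_def)
  then have "{i. i < n \<and> \<not> c y i} \<subset> {i. i < n \<and> \<not> c x i}"
    using mono_colour[OF sep_in_M[OF assms(1)] assms(2) _ assms(3)] q by auto
  then show ?thesis unfolding rank_def by (rule psubset_card_mono[rotated]) auto
qed

lemma rank_le: "rank x \<le> n"
proof -
  have "rank x \<le> card {..<n}" unfolding rank_def by (rule card_mono) auto
  then show ?thesis by simp
qed

lemma rank_pos:
  assumes "x \<in> S"
  shows "rank x > 0"
proof -
  obtain q where "q < n" "\<not> c x q" using sep_border[OF assms] by (auto simp: border_point_def)
  then have "q \<in> {i. i < n \<and> \<not> c x i}" by simp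
  then show ?thesis unfolding rank_def by (subst card_gt_0_iff) auto
qed

lemma finite_Th_rank_le: "finite (Th ` {x\<in>S. rank x \<le> r})"
proof (induction r)
  case 0
  have "{x\<in>S. rank x \<le> 0} = {}" using rank_pos by fastforce
  then show ?case by (metis finite.emptyI image_empty)
next
  case (Suc r)
  define A where "A = {x\<in>S. rank x \<le> Suc r}"
  define P where "P x = (colour x, strict_sep_theories x)" for x
  have "strict_sep_theories x \<subseteq> Th ` {x\<in>S. rank x \<le> r}" if x: "x \<in> A" for x
  proof
    fix t assume "t \<in> strict_sep_theories x"
    then obtain y where y: "y \<in> S" "le x y" "y \<noteq> x" "t = Th y"
      by (auto simp: strict_sep_theories_def)
    then have "rank y < rank x" using rank_less x sep_in_M by (auto simp: A_def)
    then show "t \<in> Th ` {x\<in>S. rank x \<le> r}" using x y by (auto simp: A_def)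
  qed
  then have "P ` A \<subseteq> Pow {..<n} \<times> Pow (Th ` {x\<in>S. rank x \<le> r})"
    unfolding P_def colour_def by blast
  then have "finite (P ` A)"
    using Suc by (meson finite_Pow_iff finite_SigmaI finite_lessThan finite_subset)
  moreover have "Th ` A \<subseteq> (\<lambda>p. Th (SOME x. x \<in> A \<and> P x = p)) ` P ` A"
  proof
    fix t assume "t \<in> Th ` A"
    then obtain x where x: "x \<in> A" "t = Th x" by auto
    let ?x = "SOME y. y \<in> A \<and> P y = P x"
    have "?x \<in> A \<and> P ?x = P x" by (rule someI[of _ x]) (use x in auto)
    then have "Th ?x = Th x" using Th_eqI_sep[of ?x x] x by (auto simp: A_def P_def)
    then show "t \<in> (\<lambda>p. Th (SOME x. x \<in> A \<and> P x = p)) ` P ` A" using x by auto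
  qed
  ultimately have "finite (Th ` A)" by (meson finite_imageI finite_subset)
  then show ?case by (simp add: A_def)
qed

lemma finite_Th_sep: "finite (Th ` S)"
proof -
  have "S = {x\<in>S. rank x \<le> n}" using rank_le by auto
  then show ?thesis using finite_Th_rank_le[of n] by simp
qed

lemma Th_generator:
  assumes "z \<in> S"
  shows "\<exists>\<beta>. frm_over n \<beta> \<and> sats z \<beta> \<and> (\<forall>v\<in>S. sats v \<beta> \<longrightarrow> Th z \<subseteq> Th v)"
proof -
  define wit where "wit t = (SOME \<phi>. \<phi> \<in> Th z \<and> \<phi> \<notin> t)" for t
  have wit: "wit t \<in> Th z \<and> wit t \<notin> t" if "\<not> Th z \<subseteq> t" for t
    unfolding wit_def by (rule someI_ex) (use that in auto)
  define F where "F = wit ` {t \<in> Th ` S. \<not> Th z \<subseteq> t}"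
  have "finite F" unfolding F_def using finite_Th_sep by auto
  moreover have "\<forall>\<phi>\<in>F. frm_over n \<phi> \<and> sats z \<phi>"
    using wit by (auto simp: F_def Th_def)
  ultimately obtain \<beta> where \<beta>: "frm_over n \<beta>" "\<forall>x. sats x \<beta> \<longleftrightarrow> (\<forall>\<phi>\<in>F. sats x \<phi>)"
    using finite_Conj_exists[OF n_pos, of F M le c] by blast
  have "Th z \<subseteq> Th v" if "v \<in> S" "sats v \<beta>" for v
  proof (rule ccontr)
    assume "\<not> Th z \<subseteq> Th v"
    then have "wit (Th v) \<in> F" "wit (Th v) \<notin> Th v" "wit (Th v) \<in> Th z"
      using that wit by (auto simp: F_def)
    then show False using \<beta>(2) that(2) by (auto simp: Th_def)
  qed
  then show ?thesis using \<beta> \<open>\<forall>\<phi>\<in>F. frm_over n \<phi> \<and> sats z \<phi>\<close> by blast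
qed

text \<open>With q a variable for which z is a q-border point, the formula is \<open>\<beta> \<rightarrow> p_q\<close> for the
generator \<open>\<beta>\<close> of the theory of z: a separated point refuting it has a theory containing that of z,
and cannot contain more, since \<open>\<phi> \<rightarrow> p_q\<close> holds at z for every \<open>\<phi>\<close> refuted at z.\<close>

lemma Th_exclusion_formula:
  assumes "z \<in> S"
  shows "\<exists>\<chi>. frm_over n \<chi> \<and> (\<forall>v\<in>M. \<not> sats v \<chi> \<longleftrightarrow> (\<exists>w\<in>S. le v w \<and> Th w = Th z))"
proof -
  obtain q where q: "q < n" "border_point M le c q z" using sep_border assms by blast
  obtain \<beta> where \<beta>: "frm_over n \<beta>" "sats z \<beta>" "\<forall>v\<in>S. sats v \<beta> \<longrightarrow> Th z \<subseteq> Th v"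
    using Th_generator assms by blast
  let ?\<chi> = "Imp \<beta> (Var q)"
  have z_refutes: "\<not> sats z ?\<chi>" using \<beta> q assms sep_in_M refl_le by (auto simp: border_point_def)
  have "\<exists>w\<in>S. le v w \<and> Th w = Th z" if v: "v \<in> M" "\<not> sats v ?\<chi>" for v
  proof -
    obtain v' where v': "v' \<in> M" "le v v'" "sats v' \<beta>" "\<not> c v' q" using v by auto
    obtain w where w: "w \<in> S" "le v' w" "\<not> c w q"
      using refuted_at_sep[of "Var q" v'] v' q by auto
    have "sats w \<beta>" using sat_persistent[of \<beta> v' w] \<beta> v' w sep_in_M by auto
    then have sub: "Th z \<subseteq> Th w" using \<beta> w by auto
    have "\<phi> \<in> Th z" if "\<phi> \<in> Th w" for \<phi>
    proof (rule ccontr)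
      assume "\<phi> \<notin> Th z"
      then have "sats z (Imp \<phi> (Var q))"
        using q that by (auto simp: border_point_def Th_def)
      then have "Imp \<phi> (Var q) \<in> Th z" using that q by (simp add: Th_def)
      with sub have "Imp \<phi> (Var q) \<in> Th w" by blast
      then show False using that w sep_in_M refl_le by (auto simp: Th_def)
    qed
    then show ?thesis using sub w v v' sep_in_M trans_le[of v v' w] by blast
  qed
  moreover have "\<not> sats v ?\<chi>" if "v \<in> M" "w \<in> S" "le v w" "Th w = Th z" for v w
  proof
    assume "sats v ?\<chi>"
    then have "sats w ?\<chi>" using sat_persistent[of ?\<chi> v w] that \<beta> q sep_in_M by auto
    then have "?\<chi> \<in> Th w" using \<beta>(1) q(1) unfolding Th_def by simp
    then have "?\<chi> \<in> Th z" using that(4) by simp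
    then show False using z_refutes unfolding Th_def by blast
  qed
  ultimately have "\<forall>v\<in>M. \<not> sats v ?\<chi> \<longleftrightarrow> (\<exists>w\<in>S. le v w \<and> Th w = Th z)" by blast
  moreover have "frm_over n ?\<chi>" using \<beta>(1) q(1) by simp
  ultimately show ?thesis by blast
qed

lemma Th_forth:
  assumes "x \<in> S" "y \<in> S" "Th x = Th y" "x' \<in> S" "le x x'"
  shows "\<exists>y'\<in>S. le y y' \<and> Th y' = Th x'"
proof -
  obtain \<chi> where \<chi>: "frm_over n \<chi>" "\<forall>v\<in>M. \<not> sats v \<chi> \<longleftrightarrow> (\<exists>w\<in>S. le v w \<and> Th w = Th x')"
    using Th_exclusion_formula[OF assms(4)] by blast
  have "\<not> sats x \<chi>" using \<chi> assms sep_in_M by blast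
  then have "\<chi> \<notin> Th x" by (simp add: Th_def)
  then have "\<chi> \<notin> Th y" using assms(3) by simp
  then have "\<not> sats y \<chi>" using \<chi>(1) by (simp add: Th_def)
  then show ?thesis using \<chi>(2) assms(2) sep_in_M by blast
qed

lemma Th_eq_is_bisim: "is_bisim n S le c (\<lambda>a b. a \<in> S \<and> b \<in> S \<and> Th a = Th b)"
  unfolding is_bisim_def
proof (intro conjI allI impI)
  fix x y i assume "x \<in> S \<and> y \<in> S \<and> Th x = Th y" "i < n"
  moreover have "Var i \<in> Th v \<longleftrightarrow> c v i" for v
    using \<open>i < n\<close> by (simp add: Th_def)
  ultimately show "c x i = c y i" by metis
next
  fix x y x' assume "x \<in> S \<and> y \<in> S \<and> Th x = Th y" "x' \<in> S" "le x x'"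
  then show "\<exists>y'\<in>S. le y y' \<and> x' \<in> S \<and> y' \<in> S \<and> Th x' = Th y'"
    using Th_forth[of x y x'] by auto
next
  fix x y y' assume "x \<in> S \<and> y \<in> S \<and> Th x = Th y" "y' \<in> S" "le y y'"
  then show "\<exists>x'\<in>S. le x x' \<and> x' \<in> S \<and> y' \<in> S \<and> Th x' = Th y'"
    using Th_forth[of y x y'] by auto
qed auto

lemma sat_bisim_invariant:
  assumes "is_bisim n S le c R"
  shows "frm_over n \<phi> \<Longrightarrow> R y z \<Longrightarrow> sats y \<phi> \<longleftrightarrow> sats z \<phi>"
proof (induction \<phi> arbitrary: y z)
  case (Var i)
  then show ?case using assms by (auto simp: is_bisim_def)
next
  case (Conj a b)
  then show ?case by auto
next
  case (Imp a b)
  have "y \<in> S" "z \<in> S" using Imp.prems assms by (auto simp: is_bisim_def)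
  then have "sats y (Imp a b) \<longleftrightarrow> (\<forall>y'\<in>S. le y y' \<longrightarrow> sats y' a \<longrightarrow> sats y' b)"
    and "sats z (Imp a b) \<longleftrightarrow> (\<forall>z'\<in>S. le z z' \<longrightarrow> sats z' a \<longrightarrow> sats z' b)"
    using sat_Imp_iff_sep sep_in_M Imp.prems by auto
  moreover have "(\<forall>y'\<in>S. le y y' \<longrightarrow> sats y' a \<longrightarrow> sats y' b) \<longleftrightarrow>
                 (\<forall>z'\<in>S. le z z' \<longrightarrow> sats z' a \<longrightarrow> sats z' b)"
  proof (intro iffI ballI impI)
    fix z' assume H: "\<forall>y'\<in>S. le y y' \<longrightarrow> sats y' a \<longrightarrow> sats y' b"
      and z': "z' \<in> S" "le z z'" "sats z' a"
    then obtain y' where "y' \<in> S" "le y y'" "R y' z'"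
      using assms Imp.prems unfolding is_bisim_def by blast
    then show "sats z' b" using H z' Imp by auto
  next
    fix y' assume H: "\<forall>z'\<in>S. le z z' \<longrightarrow> sats z' a \<longrightarrow> sats z' b"
      and y': "y' \<in> S" "le y y'" "sats y' a"
    then obtain z' where "z' \<in> S" "le z z'" "R y' z'"
      using assms Imp.prems unfolding is_bisim_def by blast
    then show "sats y' b" using H y' Imp by auto
  qed
  ultimately show ?case by simp
qed

lemma bisimilar_iff_Th_eq: "bisimilar_s n M le c a b \<longleftrightarrow> a \<in> S \<and> b \<in> S \<and> Th a = Th b"
proof
  assume "bisimilar_s n M le c a b"
  then obtain R where R: "is_bisim n S le c R" "R a b" by (auto simp: bisimilar_s_def)
  then have "a \<in> S \<and> b \<in> S" by (auto simp: is_bisim_def)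
  moreover have "Th a = Th b" using sat_bisim_invariant[OF R(1) _ R(2)] by (auto simp: Th_def)
  ultimately show "a \<in> S \<and> b \<in> S \<and> Th a = Th b" by blast
next
  assume "a \<in> S \<and> b \<in> S \<and> Th a = Th b"
  then show "bisimilar_s n M le c a b"
    unfolding bisimilar_s_def using Th_eq_is_bisim by blast
qed

lemma avoiding_theories_definable:
  assumes "T \<subseteq> Th ` S"
  shows "\<exists>\<psi>. frm_over n \<psi> \<and> (\<forall>v\<in>M. sats v \<psi> \<longleftrightarrow> (\<forall>w\<in>S. le v w \<longrightarrow> Th w \<notin> T))"
proof -
  define excl where
    "excl t = (SOME \<chi>. frm_over n \<chi> \<and> (\<forall>v\<in>M. \<not> sats v \<chi> \<longleftrightarrow> (\<exists>w\<in>S. le v w \<and> Th w = t)))"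
    for t
  have excl: "frm_over n (excl t) \<and> (\<forall>v\<in>M. \<not> sats v (excl t) \<longleftrightarrow> (\<exists>w\<in>S. le v w \<and> Th w = t))"
    if "t \<in> T" for t
    unfolding excl_def by (rule someI_ex) (use that assms Th_exclusion_formula in blast)
  have "finite (excl ` T)" using finite_subset[OF assms finite_Th_sep] by simp
  then obtain \<psi> where \<psi>: "frm_over n \<psi>" "\<forall>v. sats v \<psi> \<longleftrightarrow> (\<forall>\<phi>\<in>excl ` T. sats v \<phi>)"
    using finite_Conj_exists[OF n_pos, of "excl ` T" M le c] excl by blast
  have "sats v \<psi> \<longleftrightarrow> (\<forall>w\<in>S. le v w \<longrightarrow> Th w \<notin> T)" if "v \<in> M" for v
  proof -
    have "sats v \<psi> \<longleftrightarrow> (\<forall>t\<in>T. sats v (excl t))" using \<psi>(2) by simp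
    also have "\<dots> \<longleftrightarrow> (\<forall>t\<in>T. \<not> (\<exists>w\<in>S. le v w \<and> Th w = t))"
      using excl that by (intro ball_cong) auto
    finally show ?thesis by blast
  qed
  then show ?thesis using \<psi>(1) by blast
qed

definition definable :: "'a set \<Rightarrow> bool" where
  "definable U \<longleftrightarrow> (\<exists>\<phi>. frm_over n \<phi> \<and> val M le c \<phi> = U)"

definition bisim_saturated :: "'a set \<Rightarrow> bool" where
  "bisim_saturated U \<longleftrightarrow>
     (\<forall>x\<in>M. (\<forall>z\<in>S. le x z \<longrightarrow> (\<exists>y\<in>U \<inter> S. bisimilar_s n M le c y z)) \<longrightarrow> x \<in> U)"

definition sep_determined :: "'a set \<Rightarrow> bool" where
  "sep_determined U \<longleftrightarrow> (\<forall>x\<in>M. (\<forall>z\<in>S. le x z \<longrightarrow> z \<in> U) \<longrightarrow> x \<in> U)"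

definition bisim_closed_sep :: "'a set \<Rightarrow> bool" where
  "bisim_closed_sep U \<longleftrightarrow> (\<forall>x\<in>S. (\<exists>x'\<in>U \<inter> S. bisimilar_s n M le c x' x) \<longrightarrow> x \<in> U)"

lemma definable_imp_bisim_saturated:
  assumes "definable U"
  shows "bisim_saturated U"
  unfolding bisim_saturated_def
proof (intro ballI impI)
  fix x assume x: "x \<in> M" and cover: "\<forall>z\<in>S. le x z \<longrightarrow> (\<exists>y\<in>U \<inter> S. bisimilar_s n M le c y z)"
  obtain \<phi> where \<phi>: "frm_over n \<phi>" "val M le c \<phi> = U"
    using assms by (auto simp: definable_def)
  show "x \<in> U"
  proof (rule ccontr)
    assume "x \<notin> U"
    then obtain z where z: "z \<in> S" "le x z" "\<not> sats z \<phi>"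
      using refuted_at_sep \<phi> x by (auto simp: val_def)
    then obtain y where "y \<in> U" "Th y = Th z"
      using cover bisimilar_iff_Th_eq by blast
    then show False using \<phi> z by (auto simp: val_def Th_def)
  qed
qed

lemma bisim_saturated_imp_definable:
  assumes "up_set M le U" "bisim_saturated U"
  shows "definable U"
proof -
  define bad where "bad = {z\<in>S. \<not> (\<exists>y\<in>U \<inter> S. bisimilar_s n M le c y z)}"
  obtain \<psi> where \<psi>: "frm_over n \<psi>" "\<forall>v\<in>M. sats v \<psi> \<longleftrightarrow> (\<forall>w\<in>S. le v w \<longrightarrow> Th w \<notin> Th ` bad)"
    using avoiding_theories_definable[of "Th ` bad"] by (auto simp: bad_def)
  have "x \<in> U" if "x \<in> M" "sats x \<psi>" for x
    using assms(2) that \<psi>(2) unfolding bisim_saturated_def bad_def by blast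
  moreover have "sats x \<psi>" if x: "x \<in> U" for x
  proof -
    have "Th w \<notin> Th ` bad" if "w \<in> S" "le x w" for w
    proof
      assume "Th w \<in> Th ` bad"
      then obtain z where z: "z \<in> bad" "Th z = Th w" by auto
      have "w \<in> U" using assms(1) x that sep_in_M by (auto simp: up_set_def)
      then show False using z that bisimilar_iff_Th_eq by (auto simp: bad_def)
    qed
    then show ?thesis using \<psi>(2) x assms(1) by (auto simp: up_set_def)
  qed
  ultimately have "val M le c \<psi> = U" using assms(1) by (auto simp: val_def up_set_def)
  then show ?thesis using \<psi>(1) by (auto simp: definable_def)
qed

lemma bisim_saturated_iff:
  assumes "up_set M le U"
  shows "bisim_saturated U \<longleftrightarrow> sep_determined U \<and> bisim_closed_sep U"
proof safe
  assume sat: "bisim_saturated U"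
  then show "sep_determined U"
    unfolding bisim_saturated_def sep_determined_def using bisimilar_iff_Th_eq by blast
  show "bisim_closed_sep U" unfolding bisim_closed_sep_def
  proof (intro ballI impI)
    fix x assume "x \<in> S" "\<exists>x'\<in>U \<inter> S. bisimilar_s n M le c x' x"
    then obtain x' where x': "x' \<in> U \<inter> S" "Th x' = Th x" using bisimilar_iff_Th_eq by blast
    have "\<exists>y\<in>U \<inter> S. bisimilar_s n M le c y z" if z: "z \<in> S" "le x z" for z
    proof -
      obtain y where "y \<in> S" "le x' y" "Th y = Th z"
        using Th_forth[of x x' z] x' \<open>x \<in> S\<close> z by auto
      moreover have "y \<in> U" using assms x' calculation sep_in_M by (auto simp: up_set_def)
      ultimately show ?thesis using z bisimilar_iff_Th_eq by blast
    qed
    then show "x \<in> U" using sat \<open>x \<in> S\<close> sep_in_M by (auto simp: bisim_saturated_def)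
  qed
next
  assume "sep_determined U" "bisim_closed_sep U"
  then show "bisim_saturated U"
    unfolding sep_determined_def bisim_closed_sep_def bisim_saturated_def by blast
qed

end

theorem theorem3p19:
  fixes n :: nat and M :: "'a set" and le :: "'a \<Rightarrow> 'a \<Rightarrow> bool"
    and c :: "'a \<Rightarrow> nat \<Rightarrow> bool" and U :: "'a set"
  assumes "n \<ge> 1"
    and "is_model n M le c"
    and "has_borders n M le c"
    and "up_set M le U"
  defines "Ms \<equiv> sep_pts n M le c"
  shows "((\<exists>\<phi>. vars \<phi> \<subseteq> {..<n} \<and> val M le c \<phi> = U)
          \<longleftrightarrow>
          (\<forall>x\<in>M. (\<forall>z\<in>Ms. le x z \<longrightarrow> (\<exists>y\<in>U \<inter> Ms. bisimilar_s n M le c y z)) \<longrightarrow> x \<in> U))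
       \<and>
         ((\<forall>x\<in>M. (\<forall>z\<in>Ms. le x z \<longrightarrow> (\<exists>y\<in>U \<inter> Ms. bisimilar_s n M le c y z)) \<longrightarrow> x \<in> U)
          \<longleftrightarrow>
          (\<forall>x\<in>M. ((\<forall>z\<in>Ms. le x z \<longrightarrow> z \<in> U) \<longrightarrow> x \<in> U) \<and>
                  (x \<in> Ms \<longrightarrow> (\<exists>x'\<in>U \<inter> Ms. bisimilar_s n M le c x' x) \<longrightarrow> x \<in> U)))"
proof -
  interpret bordered_model n M le c
    using assms(1-3) by unfold_locales
  have "definable U \<longleftrightarrow> bisim_saturated U"
    using definable_imp_bisim_saturated bisim_saturated_imp_definable assms(4) by blast
  moreover have "bisim_saturated U \<longleftrightarrow> sep_determined U \<and> bisim_closed_sep U"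
    using bisim_saturated_iff assms(4) .
  moreover have "bisim_closed_sep U \<longleftrightarrow>
      (\<forall>x\<in>M. x \<in> S \<longrightarrow> (\<exists>x'\<in>U \<inter> S. bisimilar_s n M le c x' x) \<longrightarrow> x \<in> U)"
    unfolding bisim_closed_sep_def using sep_in_M by blast
  ultimately show ?thesis
    unfolding definable_def bisim_saturated_def sep_determined_def frm_over_def Ms_def
      ball_conj_distrib
    by simp
qed

end
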